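(* Let $V_S,V_A',V_A''$ be finite sets of propositional variables with $V_S\cap V_A''=\emptyset$. Let $\mathcal{T}_S^l,\mathcal{T}_S^u$ be propositional theories over $V_S$, let $\mathcal{T}_B'$ be a theory over $V_S\cup V_A'$ and $\mathcal{T}_B''$ a theory over $V_A'\cup V_A''$. Define ${\mathcal{T}_S^l}' := \mathrm{wsc}(\mathcal{T}_S^l;\mathcal{T}_B';V_A')$, ${\mathcal{T}_S^u}' := \mathrm{snc}(\mathcal{T}_S^u;\mathcal{T}_B';V_A')$. Then $\mathrm{wsc}({\mathcal{T}_S^l}';\mathcal{T}_B'';V_A'')\equiv \mathrm{wsc}(\mathcal{T}_S^l;\mathcal{T}_B'\land\mathcal{T}_B'';V_A'')$ and $\mathrm{snc}({\mathcal{T}_S^u}';\mathcal{T}_B'';V_A'')\equiv \mathrm{snc}(\mathcal{T}_S^u;\mathcal{T}_B'\land\mathcal{T}_B'';V_A'')$ (logical equivalence). That is, the tightest layered abstraction obtained in two layers coincides with the tightest abstraction from $\langle\mathcal{T}_S^l,\mathcal{T}_S^u\rangle$ with respect to $\mathcal{T}_B'\land\mathcal{T}_B''$ over $V_A''$.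
   Context: Classical propositional logic. A theory is a finite set of propositional formulas, identified with the conjunction of its elements (the empty theory is identified with $\top$). A formula is "over" a set $W$ of propositional variables if all variables occurring in it belong to $W$. Propositional quantifiers are abbreviations: $\exists p\,B := B[p:=\bot]\lor B[p:=\top]$ and $\forall p\,B := B[p:=\bot]\land B[p:=\top]$; for a finite set $V$, $\exists V$ and $\forall V$ denote iterated quantifiers. For formulas $A,\mathcal{T}$ and a set $W$ of variables, let $V$ be the set of variables occurring in $A$ or $\mathcal{T}$ but not in $W$, and define $\mathrm{snc}(A;\mathcal{T};W):=\exists V(\mathcal{T}\land A)$ and $\mathrm{wsc}(A;\mathcal{T};W):=\forall V(\mathcal{T}\to A)$; both are formulas over $W$. *)

theory Defs
  imports Main
begin

datatype 'v form =
    FBot | FTop | FVar 'v | FNot "'v form"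
  | FAnd "'v form" "'v form" | FOr "'v form" "'v form" | FImp "'v form" "'v form"

primrec eval :: "('v \<Rightarrow> bool) \<Rightarrow> 'v form \<Rightarrow> bool" where
  "eval I FBot = False"
| "eval I FTop = True"
| "eval I (FVar p) = I p"
| "eval I (FNot A) = (\<not> eval I A)"
| "eval I (FAnd A B) = (eval I A \<and> eval I B)"
| "eval I (FOr A B) = (eval I A \<or> eval I B)"
| "eval I (FImp A B) = (eval I A \<longrightarrow> eval I B)"

primrec vars :: "'v form \<Rightarrow> 'v set" where
  "vars FBot = {}"
| "vars FTop = {}"
| "vars (FVar p) = {p}"
| "vars (FNot A) = vars A"
| "vars (FAnd A B) = vars A \<union> vars B"
| "vars (FOr A B) = vars A \<union> vars B"
| "vars (FImp A B) = vars A \<union> vars B"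

primrec subst :: "'v \<Rightarrow> 'v form \<Rightarrow> 'v form \<Rightarrow> 'v form" where
  "subst p C FBot = FBot"
| "subst p C FTop = FTop"
| "subst p C (FVar q) = (if q = p then C else FVar q)"
| "subst p C (FNot A) = FNot (subst p C A)"
| "subst p C (FAnd A B) = FAnd (subst p C A) (subst p C B)"
| "subst p C (FOr A B) = FOr (subst p C A) (subst p C B)"
| "subst p C (FImp A B) = FImp (subst p C A) (subst p C B)"

definition ex1 :: "'v \<Rightarrow> 'v form \<Rightarrow> 'v form" where
  "ex1 p B = FOr (subst p FBot B) (subst p FTop B)"

definition all1 :: "'v \<Rightarrow> 'v form \<Rightarrow> 'v form" where
  "all1 p B = FAnd (subst p FBot B) (subst p FTop B)"

definition exs :: "'v::linorder set \<Rightarrow> 'v form \<Rightarrow> 'v form" where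
  "exs V B = foldr ex1 (sorted_list_of_set V) B"

definition alls :: "'v::linorder set \<Rightarrow> 'v form \<Rightarrow> 'v form" where
  "alls V B = foldr all1 (sorted_list_of_set V) B"

definition snc :: "'v::linorder form \<Rightarrow> 'v form \<Rightarrow> 'v set \<Rightarrow> 'v form" where
  "snc A T W = exs ((vars A \<union> vars T) - W) (FAnd T A)"

definition wsc :: "'v::linorder form \<Rightarrow> 'v form \<Rightarrow> 'v set \<Rightarrow> 'v form" where
  "wsc A T W = alls ((vars A \<union> vars T) - W) (FImp T A)"

definition equiv :: "'v form \<Rightarrow> 'v form \<Rightarrow> bool" where
  "equiv A B \<longleftrightarrow> (\<forall>I. eval I A = eval I B)"

end

theory Submission
  imports Defs
begin

text \<open>
  Semantically, snc A T W holds at I iff some valuation agreeing with I on W satisfies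
  T and A, and dually for wsc. In the two-layer abstraction, a model K of TB1 and TSl found
  for a valuation J is glued with J: take K on VS \<union> VA1 and J elsewhere. Since TB2 only
  sees VA1 \<union> VA2, where K and J agree, and VA2 misses VS, the glued valuation witnesses
  the one-layer abstraction; the converse direction takes K = J.
\<close>

lemma eval_cong: "(\<And>x. x \<in> vars B \<Longrightarrow> I x = J x) \<Longrightarrow> eval I B = eval J B"
  by (induction B) auto

lemma finite_vars: "finite (vars B)"
  by (induction B) auto

lemma eval_subst: "eval I (subst p C B) = eval (I(p := eval I C)) B"
  by (induction B) auto

lemma eval_ex1: "eval I (ex1 p B) = (\<exists>b. eval (I(p := b)) B)"
  unfolding ex1_def by (auto simp: eval_subst) (metis (full_types))

lemma eval_all1: "eval I (all1 p B) = (\<forall>b. eval (I(p := b)) B)"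
  unfolding all1_def by (auto simp: eval_subst) (metis (full_types))

lemma eval_foldr_ex1:
  "eval I (foldr ex1 xs B) = (\<exists>J. (\<forall>x. x \<notin> set xs \<longrightarrow> J x = I x) \<and> eval J B)"
proof (induction xs arbitrary: I)
  case (Cons a xs)
  show ?case
  proof
    assume "eval I (foldr ex1 (a # xs) B)"
    then obtain b J where "\<forall>x. x \<notin> set xs \<longrightarrow> J x = (I(a := b)) x" "eval J B"
      by (auto simp: eval_ex1 Cons.IH)
    then show "\<exists>J. (\<forall>x. x \<notin> set (a # xs) \<longrightarrow> J x = I x) \<and> eval J B"
      by (intro exI[of _ J]) auto
  next
    assume "\<exists>J. (\<forall>x. x \<notin> set (a # xs) \<longrightarrow> J x = I x) \<and> eval J B"
    then obtain J where "\<forall>x. x \<notin> set (a # xs) \<longrightarrow> J x = I x" "eval J B"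
      by blast
    then have "\<forall>x. x \<notin> set xs \<longrightarrow> J x = (I(a := J a)) x"
      by auto
    with \<open>eval J B\<close> have "eval (I(a := J a)) (foldr ex1 xs B)"
      unfolding Cons.IH by blast
    then show "eval I (foldr ex1 (a # xs) B)"
      by (auto simp: eval_ex1)
  qed
qed (simp flip: fun_eq_iff)

lemma eval_foldr_all1:
  "eval I (foldr all1 xs B) = (\<forall>J. (\<forall>x. x \<notin> set xs \<longrightarrow> J x = I x) \<longrightarrow> eval J B)"
proof (induction xs arbitrary: I)
  case (Cons a xs)
  show ?case
  proof
    assume "eval I (foldr all1 (a # xs) B)"
    then have all: "\<And>b J. \<forall>x. x \<notin> set xs \<longrightarrow> J x = (I(a := b)) x \<Longrightarrow> eval J B"
      by (auto simp: eval_all1 Cons.IH)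
    show "\<forall>J. (\<forall>x. x \<notin> set (a # xs) \<longrightarrow> J x = I x) \<longrightarrow> eval J B"
    proof (intro allI impI)
      fix J
      assume "\<forall>x. x \<notin> set (a # xs) \<longrightarrow> J x = I x"
      then show "eval J B"
        by (intro all[of J "J a"]) auto
    qed
  qed (auto simp: eval_all1 Cons.IH)
qed (simp flip: fun_eq_iff)

lemma eval_exs:
  "finite V \<Longrightarrow> eval I (exs V B) = (\<exists>J. (\<forall>x. x \<notin> V \<longrightarrow> J x = I x) \<and> eval J B)"
  by (simp add: exs_def eval_foldr_ex1)

lemma eval_alls:
  "finite V \<Longrightarrow> eval I (alls V B) = (\<forall>J. (\<forall>x. x \<notin> V \<longrightarrow> J x = I x) \<longrightarrow> eval J B)"
  by (simp add: alls_def eval_foldr_all1)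

lemma eval_snc:
  "eval I (snc A T W) = (\<exists>J. (\<forall>x\<in>W. J x = I x) \<and> eval J T \<and> eval J A)"
proof -
  let ?V = "(vars A \<union> vars T) - W"
  have "eval I (snc A T W) = (\<exists>J. (\<forall>x. x \<notin> ?V \<longrightarrow> J x = I x) \<and> eval J (FAnd T A))"
    unfolding snc_def by (rule eval_exs) (simp add: finite_vars)
  also have "\<dots> = (\<exists>J. (\<forall>x\<in>W. J x = I x) \<and> eval J (FAnd T A))"
  proof
    assume "\<exists>J. (\<forall>x\<in>W. J x = I x) \<and> eval J (FAnd T A)"
    then obtain J where J: "\<forall>x\<in>W. J x = I x" "eval J (FAnd T A)"
      by blast
    let ?J = "\<lambda>x. if x \<in> ?V then J x else I x"
    have "eval ?J (FAnd T A) = eval J (FAnd T A)"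
      by (rule eval_cong) (use J(1) in auto)
    with J(2) show "\<exists>J. (\<forall>x. x \<notin> ?V \<longrightarrow> J x = I x) \<and> eval J (FAnd T A)"
      by (intro exI[of _ ?J]) auto
  qed auto
  finally show ?thesis
    by simp
qed

lemma eval_wsc_eq_not_snc: "eval I (wsc A T W) = (\<not> eval I (snc (FNot A) T W))"
  unfolding wsc_def snc_def
  by (simp add: eval_alls eval_exs finite_vars) blast

lemma eval_wsc:
  "eval I (wsc A T W) = (\<forall>J. (\<forall>x\<in>W. J x = I x) \<longrightarrow> eval J T \<longrightarrow> eval J A)"
  by (auto simp: eval_wsc_eq_not_snc eval_snc)

lemma snc_snc_equiv:
  assumes "VS \<inter> VA2 = {}"
    and "vars A \<subseteq> VS" and "vars T1 \<subseteq> VS \<union> VA1" and "vars T2 \<subseteq> VA1 \<union> VA2"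
  shows "equiv (snc (snc A T1 VA1) T2 VA2) (snc A (FAnd T1 T2) VA2)"
  unfolding equiv_def
proof
  fix I
  show "eval I (snc (snc A T1 VA1) T2 VA2) = eval I (snc A (FAnd T1 T2) VA2)"
  proof
    assume "eval I (snc (snc A T1 VA1) T2 VA2)"
    then obtain J K where J: "\<forall>x\<in>VA2. J x = I x" "eval J T2"
      and K: "\<forall>x\<in>VA1. K x = J x" "eval K T1" "eval K A"
      by (auto simp: eval_snc)
    define M where "M x = (if x \<in> VS \<union> VA1 then K x else J x)" for x
    have "eval M T1 = eval K T1" "eval M A = eval K A"
      using assms(2,3) by (auto intro!: eval_cong simp: M_def)
    moreover have "eval M T2 = eval J T2"
      using assms(1,4) K(1) by (intro eval_cong) (auto simp: M_def)
    moreover have "\<forall>x\<in>VA2. M x = I x"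
      using assms(1) J(1) K(1) by (auto simp: M_def)
    ultimately show "eval I (snc A (FAnd T1 T2) VA2)"
      unfolding eval_snc using J K by (intro exI[of _ M]) simp
  next
    assume "eval I (snc A (FAnd T1 T2) VA2)"
    then obtain M where "\<forall>x\<in>VA2. M x = I x" "eval M T1" "eval M T2" "eval M A"
      by (auto simp: eval_snc)
    then show "eval I (snc (snc A T1 VA1) T2 VA2)"
      unfolding eval_snc by (auto intro!: exI[of _ M])
  qed
qed

lemma wsc_wsc_equiv:
  assumes "VS \<inter> VA2 = {}"
    and "vars A \<subseteq> VS" and "vars T1 \<subseteq> VS \<union> VA1" and "vars T2 \<subseteq> VA1 \<union> VA2"
  shows "equiv (wsc (wsc A T1 VA1) T2 VA2) (wsc A (FAnd T1 T2) VA2)"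
  unfolding equiv_def
proof
  fix I
  have "eval I (snc (snc (FNot A) T1 VA1) T2 VA2) = eval I (snc (FNot A) (FAnd T1 T2) VA2)"
    using snc_snc_equiv[of VS VA2 "FNot A" T1 VA1 T2] assms by (simp add: equiv_def)
  then have "(\<not> eval I (wsc (wsc A T1 VA1) T2 VA2)) = (\<not> eval I (wsc A (FAnd T1 T2) VA2))"
    by (simp add: eval_wsc eval_snc)
  then show "eval I (wsc (wsc A T1 VA1) T2 VA2) = eval I (wsc A (FAnd T1 T2) VA2)"
    by simp
qed

theorem mainTheorem6:
  fixes VS VA1 VA2 :: "'v::linorder set"
    and TSl TSu TB1 TB2 :: "'v form"
  assumes "finite VS" and "finite VA1" and "finite VA2"
    and "VS \<inter> VA2 = {}"
    and "vars TSl \<subseteq> VS" and "vars TSu \<subseteq> VS"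
    and "vars TB1 \<subseteq> VS \<union> VA1"
    and "vars TB2 \<subseteq> VA1 \<union> VA2"
  shows "equiv (wsc (wsc TSl TB1 VA1) TB2 VA2) (wsc TSl (FAnd TB1 TB2) VA2)
       \<and> equiv (snc (snc TSu TB1 VA1) TB2 VA2) (snc TSu (FAnd TB1 TB2) VA2)"
  using wsc_wsc_equiv[OF assms(4,5,7,8)] snc_snc_equiv[OF assms(4,6,7,8)] by blast

end
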